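(* Model (LP) (defined in the context) is equivalent to model (MIP): the optimal objective values of (LP) and (MIP) coincide, and every optimal solution $(\lambda^*,\mathbf{s}^{-*},\mathbf{s}^{+*},\delta^*,\boldsymbol{\alpha}^*,\gamma^* )$ of (LP) satisfies $\gamma^*=1$ and $\alpha^*_j\in\{0,1\}$ for all $j$, so that it is an optimal solution of (MIP).
   Context: Data envelopment analysis setting. There are $n$ decision making units (DMUs) indexed by $J=\{1,\dots,n\}$, each using $m$ inputs to produce $s$ outputs; DMU$_j$ has input vector $\mathbf{x}_j=(x_{1j},\dots,x_{mj})^T\in\mathbb{R}^m_+$ and output vector $\mathbf{y}_j=(y_{1j},\dots,y_{sj})^T\in\mathbb{R}^s_+$; $\mathbf{X}=[\mathbf{x}_1\cdots\mathbf{x}_n]$, $\mathbf{Y}=[\mathbf{y}_1\cdots\mathbf{y}_n]$. Define $\mathbf{R}^-=(R^-_1,\dots,R^-_m)^T$, $\mathbf{R}^+=(R^+_1,\dots,R^+_s)^T$ by $1/R^-_i=\max_{j}x_{ij}-\min_j x_{ij}$ and $1/R^+_r=\max_j y_{rj}-\min_j y_{rj}$. For $o\in J$, the RAM model is: $\rho_o=\min\, 1-\frac{1}{m+s}(\mathbf{R}^{-T}\mathbf{s}^-+\mathbf{R}^{+T}\mathbf{s}^+)$ subject to $\mathbf{X}\lambda+\mathbf{s}^-=\mathbf{x}_o$, $\mathbf{Y}\lambda-\mathbf{s}^+=\mathbf{y}_o$, $\mathbf{1}^T\lambda=1$, $\lambda\ge 0,\mathbf{s}^-\ge0,\mathbf{s}^+\ge0$.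 A DMU is RAM-efficient if its optimal value $\rho$ equals $1$; let $E\subseteq J$ be the index set of RAM-efficient DMUs and $\mathbf{X}_E,\mathbf{Y}_E$ the submatrices of $\mathbf{X},\mathbf{Y}$ with columns in $E$. Fix the evaluated DMU $o\in J$. Model (MIP): maximize $\mathbf{1}^T\boldsymbol{\alpha}+\gamma$ over $\lambda\in\mathbb{R}^{|E|}$, $\mathbf{s}^-\in\mathbb{R}^m$, $\mathbf{s}^+\in\mathbb{R}^s$, $\delta\in\mathbb{R}$, $\boldsymbol{\alpha}\in\{0,1\}^{|E|}$, $\gamma\in\{0,1\}$ subject to $\mathbf{X}_E\lambda+\mathbf{s}^--\mathbf{x}_o\delta=\mathbf{0}$, $\mathbf{Y}_E\lambda-\mathbf{s}^+-\mathbf{y}_o\delta=\mathbf{0}$, $\mathbf{1}^T\lambda-\delta=0$, $\mathbf{R}^{-T}\mathbf{s}^-+\mathbf{R}^{+T}\mathbf{s}^+-(m+s)(1-\rho_o)\delta=0$, $\boldsymbol{\alpha}\le\lambda$, $\gamma\le\delta$, $\lambda\ge\mathbf{0}$, $\mathbf{s}^-\ge\mathbf{0}$, $\mathbf{s}^+\ge\mathbf{0}$, $\delta\ge0$. Model (LP): the same as (MIP) except that the binary requirements are replaced by $\mathbf{0}\le\boldsymbol{\alpha}\le\mathbf{1}$ (with $\boldsymbol{\alpha}\in\mathbb{R}^{|E|}$) and $0\le\gamma\le1$ (with $\gamma\in\mathbb{R}$). *)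

theory Defs
  imports Complex_Main
begin

text \<open>Data: x i j = input i of DMU j (i < m), y r j = output r of DMU j (r < s),
  DMUs j < n.  Vectors are functions on nat; only the indicated ranges matter.\<close>

definition range_weight :: "(nat \<Rightarrow> nat \<Rightarrow> real) \<Rightarrow> nat \<Rightarrow> nat \<Rightarrow> real" where
  "range_weight v n i =
     1 / (Max ((\<lambda>j. v i j) ` {..<n}) - Min ((\<lambda>j. v i j) ` {..<n}))"

definition ram_feasible ::
  "(nat \<Rightarrow> nat \<Rightarrow> real) \<Rightarrow> (nat \<Rightarrow> nat \<Rightarrow> real) \<Rightarrow> nat \<Rightarrow> nat \<Rightarrow> nat \<Rightarrow> nat
   \<Rightarrow> (nat \<Rightarrow> real) \<Rightarrow> (nat \<Rightarrow> real) \<Rightarrow> (nat \<Rightarrow> real) \<Rightarrow> bool" where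
  "ram_feasible x y n m s k lam sm sp \<longleftrightarrow>
     (\<forall>i<m. (\<Sum>j<n. x i j * lam j) + sm i = x i k) \<and>
     (\<forall>r<s. (\<Sum>j<n. y r j * lam j) - sp r = y r k) \<and>
     (\<Sum>j<n. lam j) = 1 \<and>
     (\<forall>j<n. lam j \<ge> 0) \<and> (\<forall>i<m. sm i \<ge> 0) \<and> (\<forall>r<s. sp r \<ge> 0)"

definition weighted_slack ::
  "(nat \<Rightarrow> nat \<Rightarrow> real) \<Rightarrow> (nat \<Rightarrow> nat \<Rightarrow> real) \<Rightarrow> nat \<Rightarrow> nat \<Rightarrow> nat
   \<Rightarrow> (nat \<Rightarrow> real) \<Rightarrow> (nat \<Rightarrow> real) \<Rightarrow> real" where
  "weighted_slack x y n m s sm sp =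
     (\<Sum>i<m. range_weight x n i * sm i) + (\<Sum>r<s. range_weight y n r * sp r)"

definition ram_obj ::
  "(nat \<Rightarrow> nat \<Rightarrow> real) \<Rightarrow> (nat \<Rightarrow> nat \<Rightarrow> real) \<Rightarrow> nat \<Rightarrow> nat \<Rightarrow> nat
   \<Rightarrow> (nat \<Rightarrow> real) \<Rightarrow> (nat \<Rightarrow> real) \<Rightarrow> real" where
  "ram_obj x y n m s sm sp = 1 - weighted_slack x y n m s sm sp / real (m + s)"

definition ram_rho ::
  "(nat \<Rightarrow> nat \<Rightarrow> real) \<Rightarrow> (nat \<Rightarrow> nat \<Rightarrow> real) \<Rightarrow> nat \<Rightarrow> nat \<Rightarrow> nat \<Rightarrow> nat \<Rightarrow> real" where
  "ram_rho x y n m s k =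
     Inf {ram_obj x y n m s sm sp | lam sm sp. ram_feasible x y n m s k lam sm sp}"

definition eff_set ::
  "(nat \<Rightarrow> nat \<Rightarrow> real) \<Rightarrow> (nat \<Rightarrow> nat \<Rightarrow> real) \<Rightarrow> nat \<Rightarrow> nat \<Rightarrow> nat \<Rightarrow> nat set" where
  "eff_set x y n m s = {j. j < n \<and> ram_rho x y n m s j = 1}"

text \<open>Common constraints of (MIP) and (LP) for evaluated DMU k and index set E.
  lam and alpha are indexed by E (zero outside E); sm by i<m, sp by r<s (zero outside).\<close>
definition common_constr ::
  "(nat \<Rightarrow> nat \<Rightarrow> real) \<Rightarrow> (nat \<Rightarrow> nat \<Rightarrow> real) \<Rightarrow> nat \<Rightarrow> nat \<Rightarrow> nat \<Rightarrow> nat \<Rightarrow> nat set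
   \<Rightarrow> (nat \<Rightarrow> real) \<Rightarrow> (nat \<Rightarrow> real) \<Rightarrow> (nat \<Rightarrow> real) \<Rightarrow> real \<Rightarrow> (nat \<Rightarrow> real) \<Rightarrow> real \<Rightarrow> bool" where
  "common_constr x y n m s k E lam sm sp \<delta> \<alpha> \<gamma> \<longleftrightarrow>
     (\<forall>i<m. (\<Sum>j\<in>E. x i j * lam j) + sm i - x i k * \<delta> = 0) \<and>
     (\<forall>r<s. (\<Sum>j\<in>E. y r j * lam j) - sp r - y r k * \<delta> = 0) \<and>
     (\<Sum>j\<in>E. lam j) - \<delta> = 0 \<and>
     weighted_slack x y n m s sm sp - real (m + s) * (1 - ram_rho x y n m s k) * \<delta> = 0 \<and>
     (\<forall>j\<in>E. \<alpha> j \<le> lam j) \<and> \<gamma> \<le> \<delta> \<and>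
     (\<forall>j\<in>E. lam j \<ge> 0) \<and> (\<forall>i<m. sm i \<ge> 0) \<and> (\<forall>r<s. sp r \<ge> 0) \<and> \<delta> \<ge> 0 \<and>
     (\<forall>j. j \<notin> E \<longrightarrow> lam j = 0 \<and> \<alpha> j = 0) \<and>
     (\<forall>i. m \<le> i \<longrightarrow> sm i = 0) \<and> (\<forall>r. s \<le> r \<longrightarrow> sp r = 0)"

definition mip_feasible where
  "mip_feasible x y n m s k E lam sm sp \<delta> \<alpha> \<gamma> \<longleftrightarrow>
     common_constr x y n m s k E lam sm sp \<delta> \<alpha> \<gamma> \<and>
     (\<forall>j\<in>E. \<alpha> j \<in> {0, 1}) \<and> \<gamma> \<in> {0, 1}"

definition lp_feasible where
  "lp_feasible x y n m s k E lam sm sp \<delta> \<alpha> \<gamma> \<longleftrightarrow>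
     common_constr x y n m s k E lam sm sp \<delta> \<alpha> \<gamma> \<and>
     (\<forall>j\<in>E. 0 \<le> \<alpha> j \<and> \<alpha> j \<le> 1) \<and> 0 \<le> \<gamma> \<and> \<gamma> \<le> 1"

definition eq_obj :: "nat set \<Rightarrow> (nat \<Rightarrow> real) \<Rightarrow> real \<Rightarrow> real" where
  "eq_obj E \<alpha> \<gamma> = (\<Sum>j\<in>E. \<alpha> j) + \<gamma>"

definition mip_optimal where
  "mip_optimal x y n m s k E lam sm sp \<delta> \<alpha> \<gamma> \<longleftrightarrow>
     mip_feasible x y n m s k E lam sm sp \<delta> \<alpha> \<gamma> \<and>
     (\<forall>lam' sm' sp' \<delta>' \<alpha>' \<gamma>'. mip_feasible x y n m s k E lam' sm' sp' \<delta>' \<alpha>' \<gamma>'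
        \<longrightarrow> eq_obj E \<alpha>' \<gamma>' \<le> eq_obj E \<alpha> \<gamma>)"

definition lp_optimal where
  "lp_optimal x y n m s k E lam sm sp \<delta> \<alpha> \<gamma> \<longleftrightarrow>
     lp_feasible x y n m s k E lam sm sp \<delta> \<alpha> \<gamma> \<and>
     (\<forall>lam' sm' sp' \<delta>' \<alpha>' \<gamma>'. lp_feasible x y n m s k E lam' sm' sp' \<delta>' \<alpha>' \<gamma>'
        \<longrightarrow> eq_obj E \<alpha>' \<gamma>' \<le> eq_obj E \<alpha> \<gamma>)"

end

theory Submission
  imports Defs "HOL-Analysis.Analysis"
begin

text \<open>
  The constraints of (LP) on \<open>(\<lambda>, s\<^sup>-, s\<^sup>+, \<delta>)\<close> alone describe a convex cone.
  It contains a point with \<open>\<delta> = 1\<close>: an optimal RAM solution for \<open>o\<close> puts no weight on an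
  inefficient DMU \<open>j\<close>, since replacing \<open>j\<close> by its own optimal reference combination would
  strictly decrease \<open>\<rho>\<^sub>o\<close>. Being closed under addition, the cone has a point whose
  support \<open>S \<subseteq> E\<close> contains the support of every other point; after adding the point with
  \<open>\<delta> = 1\<close> and scaling, \<open>\<lambda>\<^sub>j \<ge> 1\<close> on \<open>S\<close> and \<open>\<delta> \<ge> 1\<close>. As \<open>\<alpha>\<^sub>j \<le> \<lambda>\<^sub>j = 0\<close> off \<open>S\<close>,
  every LP-feasible point has objective at most \<open>|S| + 1\<close>, and this value is attained
  exactly when \<open>\<alpha>\<close> is the indicator of \<open>S\<close> and \<open>\<gamma> = 1\<close>, which is MIP-feasible.
\<close>

lemma exists_maximal_support:
  fixes supp :: "'a \<Rightarrow> 'b set"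
  assumes "finite U" "P a0" "\<And>a. P a \<Longrightarrow> supp a \<subseteq> U"
    and union: "\<And>a b. P a \<Longrightarrow> P b \<Longrightarrow> \<exists>c. P c \<and> supp a \<union> supp b \<subseteq> supp c"
  shows "\<exists>a. P a \<and> (\<forall>b. P b \<longrightarrow> supp b \<subseteq> supp a)"
proof -
  have "\<forall>a. P a \<longrightarrow> card (supp a) < Suc (card U)"
    using assms(1,3) by (simp add: card_mono le_imp_less_Suc)
  then obtain a where "P a" and card_max: "\<And>b. P b \<Longrightarrow> card (supp b) \<le> card (supp a)"
    using Lattices_Big.ex_has_greatest_nat[of P a0 "\<lambda>a. card (supp a)"] assms(2) by blast
  have "supp b \<subseteq> supp a" if "P b" for b
  proof -
    obtain c where "P c" and c: "supp a \<union> supp b \<subseteq> supp c"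
      using union[OF \<open>P a\<close> \<open>P b\<close>] by blast
    have fin: "finite (supp c)" using assms(1,3) \<open>P c\<close> finite_subset by blast
    then have "card (supp c) \<le> card (supp a)" using card_max[OF \<open>P c\<close>] by simp
    then have "supp a = supp c" using c fin by (intro card_subset_eq) (auto simp: card_mono order.antisym)
    then show ?thesis using c by blast
  qed
  then show ?thesis using \<open>P a\<close> by blast
qed

lemma weighted_slack_add:
  "weighted_slack x y n m s (\<lambda>i. a i + b i) (\<lambda>r. c r + d r) =
   weighted_slack x y n m s a c + weighted_slack x y n m s b d"
  unfolding weighted_slack_def by (simp add: sum.distrib distrib_left)

lemma weighted_slack_scale:
  "weighted_slack x y n m s (\<lambda>i. t * a i) (\<lambda>r. t * c r) = t * weighted_slack x y n m s a c"
  unfolding weighted_slack_def by (simp add: sum_distrib_left distrib_left mult.left_commute)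

lemma range_weight_nonneg: "0 < n \<Longrightarrow> 0 \<le> range_weight v n i"
  unfolding range_weight_def
  by (metis (no_types) Max_ge Min_le diff_ge_0_iff_ge divide_nonneg_nonneg finite_imageI
      finite_lessThan image_eqI lessThan_iff order_trans zero_le_one)

lemma weighted_slack_nonneg:
  assumes "0 < n" "\<forall>i<m. 0 \<le> sm i" "\<forall>r<s. 0 \<le> sp r"
  shows "0 \<le> weighted_slack x y n m s sm sp"
  unfolding weighted_slack_def using assms range_weight_nonneg
  by (auto intro!: add_nonneg_nonneg sum_nonneg mult_nonneg_nonneg)

definition ram_optimal ::
  "(nat \<Rightarrow> nat \<Rightarrow> real) \<Rightarrow> (nat \<Rightarrow> nat \<Rightarrow> real) \<Rightarrow> nat \<Rightarrow> nat \<Rightarrow> nat \<Rightarrow> nat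
   \<Rightarrow> (nat \<Rightarrow> real) \<Rightarrow> (nat \<Rightarrow> real) \<Rightarrow> (nat \<Rightarrow> real) \<Rightarrow> bool" where
  "ram_optimal x y n m s k lam sm sp \<longleftrightarrow>
     ram_feasible x y n m s k lam sm sp \<and>
     (\<forall>lam' sm' sp'. ram_feasible x y n m s k lam' sm' sp' \<longrightarrow>
        ram_obj x y n m s sm sp \<le> ram_obj x y n m s sm' sp')"

lemma ram_rho_eq_optimal_obj:
  "ram_optimal x y n m s k lam sm sp \<Longrightarrow> ram_rho x y n m s k = ram_obj x y n m s sm sp"
  unfolding ram_rho_def ram_optimal_def by (intro cInf_eq_minimum) auto

lemma compact_unit_box: "compact (Pi UNIV (\<lambda>j::nat. if j < n then {0..1::real} else {0}))"
proof -
  have "compactin (product_topology (\<lambda>_. euclidean) UNIV)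
      (PiE UNIV (\<lambda>j::nat. if j < n then {0..1::real} else {0}))"
    by (subst compactin_PiE) auto
  then show ?thesis by (simp add: euclidean_product_topology PiE_UNIV_domain)
qed

lemma ram_optimal_exists:
  assumes "k < n"
  shows "\<exists>lam sm sp. ram_optimal x y n m s k lam sm sp \<and> (\<forall>j\<ge>n. lam j = 0)"
proof -
  define SM where "SM l = (\<lambda>i. x i k - (\<Sum>j<n. x i j * l j))" for l :: "nat \<Rightarrow> real"
  define SP where "SP l = (\<lambda>r. (\<Sum>j<n. y r j * l j) - y r k)" for l :: "nat \<Rightarrow> real"
  define G where "G l = ram_obj x y n m s (SM l) (SP l)" for l
  define Box where "Box = Pi UNIV (\<lambda>j::nat. if j < n then {0..1::real} else {0})"
  define K where "K = Box \<inter> {l. \<forall>i<m. (\<Sum>j<n. x i j * l j) \<le> x i k}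
     \<inter> {l. \<forall>r<s. y r k \<le> (\<Sum>j<n. y r j * l j)} \<inter> {l. (\<Sum>j<n. l j) = 1}"
  have compact: "compact K"
    unfolding K_def Box_def
    by (intro compact_Int_closed closed_Int compact_unit_box closed_Collect_all closed_Collect_imp
        closed_Collect_le closed_Collect_eq continuous_intros) simp_all
  have continuous: "continuous_on K G"
    unfolding G_def ram_obj_def weighted_slack_def SM_def SP_def divide_inverse
    by (intro continuous_intros continuous_on_subset[OF continuous_on_product_coordinates]) simp_all
  have unit_in: "(\<lambda>j. if j = k then 1 else 0) \<in> K"
    unfolding K_def Box_def using assms by (auto simp: if_distrib sum.delta cong: if_cong)
  obtain l0 where "l0 \<in> K" and l0_min: "\<And>l. l \<in> K \<Longrightarrow> G l0 \<le> G l"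
    using continuous_attains_inf[OF compact _ continuous] unit_in by blast
  have truncation: "(\<lambda>j. if j < n then l j else 0) \<in> K \<and> G (\<lambda>j. if j < n then l j else 0) = ram_obj x y n m s sm sp"
    if feas: "ram_feasible x y n m s k l sm sp" for l sm sp
  proof -
    have l_nonneg: "\<forall>j<n. 0 \<le> l j" and l_sum: "(\<Sum>j<n. l j) = 1"
      using feas by (auto simp: ram_feasible_def)
    have "l j \<le> 1" if "j < n" for j
      using member_le_sum[of j "{..<n}" l] that l_nonneg l_sum by auto
    moreover have "(\<Sum>j<n. c j * (if j < n then l j else 0)) = (\<Sum>j<n. c j * l j)" for c :: "nat \<Rightarrow> real"
      by (intro sum.cong) auto
    moreover have "\<And>i. i < m \<Longrightarrow> sm i = SM l i" "\<And>r. r < s \<Longrightarrow> sp r = SP l r"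
      using feas by (auto simp: ram_feasible_def SM_def SP_def algebra_simps)
    ultimately show ?thesis
      using feas unfolding K_def Box_def G_def ram_obj_def weighted_slack_def ram_feasible_def
      by (auto simp: SM_def SP_def)
  qed
  have l0_box: "l0 j \<in> (if j < n then {0..1} else {0})" for j
    using \<open>l0 \<in> K\<close> unfolding K_def Box_def Pi_iff by blast
  have l0_nonneg: "0 \<le> l0 j" if "j < n" for j using l0_box[of j] that by simp
  have l0_zero: "l0 j = 0" if "n \<le> j" for j using l0_box[of j] that by simp
  have "ram_optimal x y n m s k l0 (SM l0) (SP l0)"
    unfolding ram_optimal_def
  proof (intro conjI allI impI)
    show "ram_feasible x y n m s k l0 (SM l0) (SP l0)"
      using \<open>l0 \<in> K\<close> l0_nonneg unfolding K_def ram_feasible_def SM_def SP_def by auto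
    show "ram_obj x y n m s (SM l0) (SP l0) \<le> ram_obj x y n m s sm' sp'"
      if "ram_feasible x y n m s k lam' sm' sp'" for lam' sm' sp'
      using l0_min truncation[OF that] unfolding G_def by metis
  qed
  with l0_zero show ?thesis by blast
qed

lemma sum_replace_term:
  fixes c l mu :: "nat \<Rightarrow> real"
  assumes "j < n"
  shows "(\<Sum>q<n. c q * (l q - (if q = j then l j else 0) + a * mu q)) =
     (\<Sum>q<n. c q * l q) - c j * l j + a * (\<Sum>q<n. c q * mu q)"
  using assms
  by (simp add: algebra_simps sum.distrib sum_subtractf sum_distrib_left if_distrib[of "(*) _"] cong: if_cong)

lemma ram_feasible_substitute:
  assumes feas_k: "ram_feasible x y n m s k l sm sp"
    and feas_j: "ram_feasible x y n m s j mu tm tp" and "j < n"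
  shows "ram_feasible x y n m s k (\<lambda>q. l q - (if q = j then l j else 0) + l j * mu q)
           (\<lambda>i. sm i + l j * tm i) (\<lambda>r. sp r + l j * tp r)"
proof -
  note replace = sum_replace_term[OF \<open>j < n\<close>]
  have "(\<Sum>q<n. x i q * (l q - (if q = j then l j else 0) + l j * mu q)) + (sm i + l j * tm i) = x i k"
    if "i < m" for i
  proof -
    have sums: "(\<Sum>q<n. x i q * l q) = x i k - sm i" "(\<Sum>q<n. x i q * mu q) = x i j - tm i"
      using that feas_k feas_j by (auto simp: ram_feasible_def algebra_simps)
    show ?thesis unfolding replace sums by (simp add: algebra_simps)
  qed
  moreover have "(\<Sum>q<n. y r q * (l q - (if q = j then l j else 0) + l j * mu q)) - (sp r + l j * tp r) = y r k"
    if "r < s" for r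
  proof -
    have sums: "(\<Sum>q<n. y r q * l q) = y r k + sp r" "(\<Sum>q<n. y r q * mu q) = y r j + tp r"
      using that feas_k feas_j by (auto simp: ram_feasible_def algebra_simps)
    show ?thesis unfolding replace sums by (simp add: algebra_simps)
  qed
  moreover have "(\<Sum>q<n. l q - (if q = j then l j else 0) + l j * mu q) = 1"
    using feas_k feas_j replace[of "\<lambda>_. 1"] by (simp add: ram_feasible_def)
  moreover have "0 \<le> l j" using feas_k \<open>j < n\<close> by (simp add: ram_feasible_def)
  ultimately show ?thesis
    using feas_k feas_j unfolding ram_feasible_def by auto
qed

lemma ram_optimal_vanishes_on_inefficient:
  assumes opt: "ram_optimal x y n m s k l sm sp" and "j < n" and "ram_rho x y n m s j \<noteq> 1"
  shows "l j = 0"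
proof (rule ccontr)
  \<comment> \<open>Otherwise, moving the weight \<open>l j\<close> onto an optimal reference combination of \<open>j\<close>
    adds \<open>l j\<close> times \<open>j\<close>'s positive slack to the weighted slack of \<open>k\<close>.\<close>
  assume "l j \<noteq> 0"
  with opt \<open>j < n\<close> have "0 < l j" by (auto simp: ram_optimal_def ram_feasible_def less_le)
  obtain mu tm tp where opt_j: "ram_optimal x y n m s j mu tm tp"
    using ram_optimal_exists[OF \<open>j < n\<close>] by blast
  then have feas_j: "ram_feasible x y n m s j mu tm tp" by (simp add: ram_optimal_def)
  have "0 \<le> weighted_slack x y n m s tm tp"
    using feas_j \<open>j < n\<close> by (intro weighted_slack_nonneg) (auto simp: ram_feasible_def)
  moreover have "ram_obj x y n m s tm tp \<noteq> 1"
    using ram_rho_eq_optimal_obj[OF opt_j] assms(3) by simp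
  ultimately have gain: "0 < l j * (weighted_slack x y n m s tm tp / real (m + s))"
    using \<open>0 < l j\<close> by (simp add: ram_obj_def)
  have "ram_feasible x y n m s k (\<lambda>q. l q - (if q = j then l j else 0) + l j * mu q)
      (\<lambda>i. sm i + l j * tm i) (\<lambda>r. sp r + l j * tp r)"
    using opt feas_j \<open>j < n\<close> by (intro ram_feasible_substitute) (simp_all add: ram_optimal_def)
  then have "ram_obj x y n m s sm sp \<le> ram_obj x y n m s (\<lambda>i. sm i + l j * tm i) (\<lambda>r. sp r + l j * tp r)"
    using opt by (auto simp: ram_optimal_def)
  also have "\<dots> = ram_obj x y n m s sm sp - l j * (weighted_slack x y n m s tm tp / real (m + s))"
    by (simp add: ram_obj_def weighted_slack_add weighted_slack_scale add_divide_distrib)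
  finally show False using gain by simp
qed

text \<open>The constraints of (MIP) and (LP) not involving \<open>\<alpha>\<close> and \<open>\<gamma>\<close>; putting \<open>\<alpha> = 0\<close>, \<open>\<gamma> = 0\<close>
  makes the remaining ones vacuous.\<close>
definition cone_feasible ::
  "(nat \<Rightarrow> nat \<Rightarrow> real) \<Rightarrow> (nat \<Rightarrow> nat \<Rightarrow> real) \<Rightarrow> nat \<Rightarrow> nat \<Rightarrow> nat \<Rightarrow> nat \<Rightarrow> nat set
   \<Rightarrow> (nat \<Rightarrow> real) \<Rightarrow> (nat \<Rightarrow> real) \<Rightarrow> (nat \<Rightarrow> real) \<Rightarrow> real \<Rightarrow> bool" where
  "cone_feasible x y n m s k E lam sm sp \<delta> \<longleftrightarrow> common_constr x y n m s k E lam sm sp \<delta> (\<lambda>_. 0) 0"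

lemma common_constr_iff_cone_feasible:
  "common_constr x y n m s k E lam sm sp \<delta> \<alpha> \<gamma> \<longleftrightarrow>
   cone_feasible x y n m s k E lam sm sp \<delta> \<and> (\<forall>j\<in>E. \<alpha> j \<le> lam j) \<and> \<gamma> \<le> \<delta> \<and> (\<forall>j. j \<notin> E \<longrightarrow> \<alpha> j = 0)"
  unfolding cone_feasible_def common_constr_def by auto

lemma cone_feasible_nonneg_combination:
  assumes "cone_feasible x y n m s k E l1 sm1 sp1 d1" "cone_feasible x y n m s k E l2 sm2 sp2 d2"
    and "0 \<le> a" "0 \<le> b"
  shows "cone_feasible x y n m s k E (\<lambda>j. a * l1 j + b * l2 j) (\<lambda>i. a * sm1 i + b * sm2 i)
     (\<lambda>r. a * sp1 r + b * sp2 r) (a * d1 + b * d2)"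
proof -
  have lin: "(\<Sum>j\<in>E. c j * (a * l1 j + b * l2 j)) = a * (\<Sum>j\<in>E. c j * l1 j) + b * (\<Sum>j\<in>E. c j * l2 j)" for c
    by (simp add: sum.distrib sum_distrib_left algebra_simps)
  have inputs: "(\<Sum>j\<in>E. x i j * (a * l1 j + b * l2 j)) + (a * sm1 i + b * sm2 i) - x i k * (a * d1 + b * d2) =
      a * ((\<Sum>j\<in>E. x i j * l1 j) + sm1 i - x i k * d1) + b * ((\<Sum>j\<in>E. x i j * l2 j) + sm2 i - x i k * d2)" for i
    unfolding lin by (simp add: algebra_simps)
  have outputs: "(\<Sum>j\<in>E. y r j * (a * l1 j + b * l2 j)) - (a * sp1 r + b * sp2 r) - y r k * (a * d1 + b * d2) =
      a * ((\<Sum>j\<in>E. y r j * l1 j) - sp1 r - y r k * d1) + b * ((\<Sum>j\<in>E. y r j * l2 j) - sp2 r - y r k * d2)" for r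
    unfolding lin by (simp add: algebra_simps)
  have convexity: "(\<Sum>j\<in>E. a * l1 j + b * l2 j) - (a * d1 + b * d2) =
      a * ((\<Sum>j\<in>E. l1 j) - d1) + b * ((\<Sum>j\<in>E. l2 j) - d2)"
    by (simp add: sum.distrib sum_distrib_left algebra_simps)
  have slack: "weighted_slack x y n m s (\<lambda>i. a * sm1 i + b * sm2 i) (\<lambda>r. a * sp1 r + b * sp2 r)
      - c * (a * d1 + b * d2) =
      a * (weighted_slack x y n m s sm1 sp1 - c * d1) + b * (weighted_slack x y n m s sm2 sp2 - c * d2)" for c
    by (simp add: weighted_slack_add weighted_slack_scale algebra_simps)
  show ?thesis
    using assms unfolding cone_feasible_def common_constr_def inputs outputs convexity slack
    by auto
qed

lemma cone_feasible_add:
  assumes "cone_feasible x y n m s k E l1 sm1 sp1 d1" "cone_feasible x y n m s k E l2 sm2 sp2 d2"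
  shows "cone_feasible x y n m s k E (\<lambda>j. l1 j + l2 j) (\<lambda>i. sm1 i + sm2 i) (\<lambda>r. sp1 r + sp2 r) (d1 + d2)"
  using cone_feasible_nonneg_combination[OF assms, of 1 1] by simp

lemma cone_feasible_scale:
  assumes "cone_feasible x y n m s k E l sm sp d" "0 \<le> t"
  shows "cone_feasible x y n m s k E (\<lambda>j. t * l j) (\<lambda>i. t * sm i) (\<lambda>r. t * sp r) (t * d)"
  using cone_feasible_nonneg_combination[OF assms(1) assms(1) assms(2), of 0] by simp

lemma cone_feasible_nonneg: "cone_feasible x y n m s k E l sm sp d \<Longrightarrow> j \<in> E \<Longrightarrow> 0 \<le> l j"
  unfolding cone_feasible_def common_constr_def by blast

lemma cone_feasible_unit_intensity:
  assumes "k < n"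
  shows "\<exists>l sm sp. cone_feasible x y n m s k (eff_set x y n m s) l sm sp 1"
proof -
  define E where "E = eff_set x y n m s"
  obtain l sm sp where opt: "ram_optimal x y n m s k l sm sp" and l_zero: "\<forall>j\<ge>n. l j = 0"
    using ram_optimal_exists[OF assms] by blast
  have feas: "ram_feasible x y n m s k l sm sp" using opt by (simp add: ram_optimal_def)
  have "E \<subseteq> {..<n}" by (auto simp: E_def eff_set_def)
  have l_vanishes: "l j = 0" if "j \<notin> E" for j
    using that l_zero ram_optimal_vanishes_on_inefficient[OF opt]
    by (cases "j < n") (auto simp: E_def eff_set_def)
  then have sum_E: "(\<Sum>j\<in>E. c j * l j) = (\<Sum>j<n. c j * l j)" for c
    using \<open>E \<subseteq> {..<n}\<close> by (intro sum.mono_neutral_left) auto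
  define sm' where "sm' i = (if i < m then sm i else 0)" for i
  define sp' where "sp' r = (if r < s then sp r else 0)" for r
  have "weighted_slack x y n m s sm' sp' = weighted_slack x y n m s sm sp"
    unfolding weighted_slack_def sm'_def sp'_def by simp
  then have "weighted_slack x y n m s sm' sp' = real (m + s) * (1 - ram_rho x y n m s k)"
    unfolding ram_rho_eq_optimal_obj[OF opt] ram_obj_def
    by (cases "m + s = 0") (auto simp: weighted_slack_def add_nonneg_eq_0_iff)
  moreover have "(\<Sum>j\<in>E. l j) = 1"
    using sum_E[of "\<lambda>_. 1"] feas by (simp add: ram_feasible_def)
  ultimately have "cone_feasible x y n m s k E l sm' sp' 1"
    using feas \<open>E \<subseteq> {..<n}\<close> l_vanishes
    unfolding cone_feasible_def common_constr_def ram_feasible_def sum_E sm'_def sp'_def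
    by auto
  then show ?thesis unfolding E_def by blast
qed

lemma cone_feasible_maximal_support:
  assumes "finite E" "cone_feasible x y n m s k E l0 sm0 sp0 d0"
  obtains ls sms sps ds where "cone_feasible x y n m s k E ls sms sps ds"
    and "\<And>l sm sp d j. cone_feasible x y n m s k E l sm sp d \<Longrightarrow> j \<in> E \<Longrightarrow> 0 < l j \<Longrightarrow> 0 < ls j"
proof -
  define P where "P l \<longleftrightarrow> (\<exists>sm sp d. cone_feasible x y n m s k E l sm sp d)" for l
  define supp where "supp l = {j\<in>E. 0 < l j}" for l :: "nat \<Rightarrow> real"
  have "\<exists>ls. P ls \<and> (\<forall>l. P l \<longrightarrow> supp l \<subseteq> supp ls)"
  proof (rule exists_maximal_support[of E P l0 supp, OF \<open>finite E\<close>])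
    show "P l0" using assms(2) unfolding P_def by blast
    show "supp l \<subseteq> E" for l by (auto simp: supp_def)
    show "\<exists>c. P c \<and> supp l1 \<union> supp l2 \<subseteq> supp c" if feasible: "P l1" "P l2" for l1 l2
    proof -
      obtain sm1 sp1 d1 sm2 sp2 d2 where
        p1: "cone_feasible x y n m s k E l1 sm1 sp1 d1" and p2: "cone_feasible x y n m s k E l2 sm2 sp2 d2"
        using feasible unfolding P_def by blast
      have "0 \<le> l1 j" "0 \<le> l2 j" if "j \<in> E" for j
        using cone_feasible_nonneg[OF p1 that] cone_feasible_nonneg[OF p2 that] .
      then have "supp l1 \<union> supp l2 \<subseteq> supp (\<lambda>j. l1 j + l2 j)"
        unfolding supp_def by (auto intro: add_pos_nonneg add_nonneg_pos)
      moreover have "P (\<lambda>j. l1 j + l2 j)" using cone_feasible_add[OF p1 p2] unfolding P_def by blast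
      ultimately show ?thesis by blast
    qed
  qed
  then show ?thesis using that unfolding P_def supp_def by blast
qed

lemma cone_point_dominating_support:
  assumes "finite E" and unit: "cone_feasible x y n m s k E l0 sm0 sp0 1"
  obtains S l sm sp d where "S \<subseteq> E" "cone_feasible x y n m s k E l sm sp d" "1 \<le> d" "\<forall>j\<in>S. 1 \<le> l j"
    and "\<And>l' sm' sp' d'. cone_feasible x y n m s k E l' sm' sp' d' \<Longrightarrow> \<forall>j\<in>E - S. l' j \<le> 0"
proof -
  obtain ls sms sps ds where ps: "cone_feasible x y n m s k E ls sms sps ds"
    and ls_max: "\<And>l sm sp d j. cone_feasible x y n m s k E l sm sp d \<Longrightarrow> j \<in> E \<Longrightarrow> 0 < l j \<Longrightarrow> 0 < ls j"
    using cone_feasible_maximal_support[OF assms] by blast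
  define S where "S = {j\<in>E. 0 < ls j}"
  have vanishing: "\<forall>j\<in>E - S. l' j \<le> 0" if "cone_feasible x y n m s k E l' sm' sp' d'" for l' sm' sp' d'
    using ls_max[OF that] by (force simp: S_def)
  \<comment> \<open>Adding the unit point makes the intensity at least 1 without shrinking the support.\<close>
  define l1 where "l1 j = ls j + l0 j" for j
  have p1: "cone_feasible x y n m s k E l1 (\<lambda>i. sms i + sm0 i) (\<lambda>r. sps r + sp0 r) (ds + 1)"
    unfolding l1_def by (rule cone_feasible_add[OF ps unit])
  have "0 \<le> ds" using ps unfolding cone_feasible_def common_constr_def by simp
  have l1_pos: "0 < l1 j" if "j \<in> S" for j
    using that cone_feasible_nonneg[OF unit, of j] unfolding l1_def S_def by simp
  define t where "t = 1 + (\<Sum>j\<in>S. 1 / l1 j)"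
  have "finite S" using \<open>finite E\<close> by (simp add: S_def)
  have "1 \<le> t" using l1_pos by (simp add: t_def sum_nonneg less_imp_le)
  have "1 \<le> t * l1 j" if "j \<in> S" for j
  proof -
    have "1 / l1 j \<le> (\<Sum>j\<in>S. 1 / l1 j)"
      using that l1_pos \<open>finite S\<close> by (intro member_le_sum) (simp_all add: less_imp_le)
    then have "1 / l1 j * l1 j \<le> t * l1 j"
      using l1_pos[OF that] by (intro mult_right_mono) (simp_all add: t_def)
    then show ?thesis using l1_pos[OF that] by simp
  qed
  moreover have "1 \<le> t * (ds + 1)" using \<open>1 \<le> t\<close> \<open>0 \<le> ds\<close> mult_mono[of 1 t 1 "ds + 1"] by simp
  moreover have "S \<subseteq> E" by (auto simp: S_def)
  moreover have "cone_feasible x y n m s k E (\<lambda>j. t * l1 j) (\<lambda>i. t * (sms i + sm0 i))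
      (\<lambda>r. t * (sps r + sp0 r)) (t * (ds + 1))"
    using cone_feasible_scale[OF p1] \<open>1 \<le> t\<close> by simp
  ultimately show ?thesis using vanishing that by blast
qed

lemma sum_plus_le_card_plus_one:
  fixes \<alpha> :: "'a \<Rightarrow> real"
  assumes "finite E" "S \<subseteq> E" "\<forall>j\<in>E. \<alpha> j \<le> 1" "\<forall>j\<in>E - S. \<alpha> j \<le> 0" "\<gamma> \<le> 1"
  shows "(\<Sum>j\<in>E. \<alpha> j) + \<gamma> \<le> card S + 1"
    and "(\<Sum>j\<in>E. \<alpha> j) + \<gamma> = card S + 1 \<longleftrightarrow> \<gamma> = 1 \<and> (\<forall>j\<in>E. \<alpha> j = of_bool (j \<in> S))"
proof -
  define gap where "gap j = of_bool (j \<in> S) - \<alpha> j" for j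
  have gap_nonneg: "\<forall>j\<in>E. 0 \<le> gap j" using assms(3,4) by (auto simp: gap_def)
  have "(\<Sum>j\<in>E. of_bool (j \<in> S) :: real) = card S"
    using assms(1,2) by (simp add: sum.inter_restrict[symmetric] Int_absorb1)
  then have sum_eq: "(\<Sum>j\<in>E. \<alpha> j) + \<gamma> = card S + 1 - (\<Sum>j\<in>E. gap j) - (1 - \<gamma>)"
    by (simp add: gap_def sum_subtractf)
  have "0 \<le> (\<Sum>j\<in>E. gap j)" using gap_nonneg by (simp add: sum_nonneg)
  then show "(\<Sum>j\<in>E. \<alpha> j) + \<gamma> \<le> card S + 1" using sum_eq assms(5) by linarith
  have "(\<Sum>j\<in>E. gap j) = 0 \<longleftrightarrow> (\<forall>j\<in>E. gap j = 0)"
    using sum_nonneg_eq_0_iff[OF assms(1)] gap_nonneg by blast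
  then show "(\<Sum>j\<in>E. \<alpha> j) + \<gamma> = card S + 1 \<longleftrightarrow> \<gamma> = 1 \<and> (\<forall>j\<in>E. \<alpha> j = of_bool (j \<in> S))"
    using sum_eq \<open>0 \<le> (\<Sum>j\<in>E. gap j)\<close> assms(5) by (auto simp: gap_def)
qed

lemma eq_obj_le_support_indicator:
  assumes "finite E" "S \<subseteq> E" "\<forall>j\<in>E - S. lam j \<le> 0" "lp_feasible x y n m s k E lam sm sp \<delta> \<alpha> \<gamma>"
  shows "eq_obj E \<alpha> \<gamma> \<le> eq_obj E (\<lambda>j. of_bool (j \<in> S)) 1"
    and "eq_obj E \<alpha> \<gamma> = eq_obj E (\<lambda>j. of_bool (j \<in> S)) 1 \<Longrightarrow> \<gamma> = 1 \<and> (\<forall>j\<in>E. \<alpha> j = of_bool (j \<in> S))"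
proof -
  have "\<forall>j\<in>E. \<alpha> j \<le> 1" "\<gamma> \<le> 1" and "\<forall>j\<in>E. \<alpha> j \<le> lam j"
    using assms(4) unfolding lp_feasible_def common_constr_iff_cone_feasible by simp_all
  moreover from this(3) have "\<forall>j\<in>E - S. \<alpha> j \<le> 0" using assms(3) by force
  ultimately
  have bound: "(\<Sum>j\<in>E. \<alpha> j) + \<gamma> \<le> card S + 1"
      "(\<Sum>j\<in>E. \<alpha> j) + \<gamma> = card S + 1 \<longleftrightarrow> \<gamma> = 1 \<and> (\<forall>j\<in>E. \<alpha> j = of_bool (j \<in> S))"
    using sum_plus_le_card_plus_one[OF assms(1,2)] by blast+
  have "eq_obj E (\<lambda>j. of_bool (j \<in> S)) 1 = card S + 1"
    using sum_plus_le_card_plus_one(2)[OF assms(1,2), of "\<lambda>j. of_bool (j \<in> S)" 1] by (simp add: eq_obj_def)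
  then show "eq_obj E \<alpha> \<gamma> \<le> eq_obj E (\<lambda>j. of_bool (j \<in> S)) 1"
    and "eq_obj E \<alpha> \<gamma> = eq_obj E (\<lambda>j. of_bool (j \<in> S)) 1 \<Longrightarrow> \<gamma> = 1 \<and> (\<forall>j\<in>E. \<alpha> j = of_bool (j \<in> S))"
    using bound by (simp_all add: eq_obj_def)
qed

lemma mip_feasible_imp_lp_feasible:
  "mip_feasible x y n m s k E lam sm sp \<delta> \<alpha> \<gamma> \<Longrightarrow> lp_feasible x y n m s k E lam sm sp \<delta> \<alpha> \<gamma>"
  unfolding mip_feasible_def lp_feasible_def by auto

lemma lp_mip_optimal_if_integral_bound:
  assumes mip: "mip_feasible x y n m s k E l sm sp d A 1"
    and bound: "\<And>lam sm sp \<delta> \<alpha> \<gamma>. lp_feasible x y n m s k E lam sm sp \<delta> \<alpha> \<gamma> \<Longrightarrow> eq_obj E \<alpha> \<gamma> \<le> eq_obj E A 1"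
    and tight: "\<And>lam sm sp \<delta> \<alpha> \<gamma>. lp_feasible x y n m s k E lam sm sp \<delta> \<alpha> \<gamma> \<Longrightarrow>
      eq_obj E \<alpha> \<gamma> = eq_obj E A 1 \<Longrightarrow> \<gamma> = 1 \<and> (\<forall>j\<in>E. \<alpha> j \<in> {0, 1})"
  shows "(\<exists>v. (\<exists>lam sm sp \<delta> \<alpha> \<gamma>. lp_optimal x y n m s k E lam sm sp \<delta> \<alpha> \<gamma> \<and> eq_obj E \<alpha> \<gamma> = v)
            \<and> (\<exists>lam sm sp \<delta> \<alpha> \<gamma>. mip_optimal x y n m s k E lam sm sp \<delta> \<alpha> \<gamma> \<and> eq_obj E \<alpha> \<gamma> = v))
       \<and> (\<forall>lam sm sp \<delta> \<alpha> \<gamma>. lp_optimal x y n m s k E lam sm sp \<delta> \<alpha> \<gamma> \<longrightarrow>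
            \<gamma> = 1 \<and> (\<forall>j\<in>E. \<alpha> j \<in> {0, 1}) \<and> mip_optimal x y n m s k E lam sm sp \<delta> \<alpha> \<gamma>)"
proof -
  have mip_optimal_if_value: "mip_optimal x y n m s k E lam sm sp \<delta> \<alpha> \<gamma>"
    if "mip_feasible x y n m s k E lam sm sp \<delta> \<alpha> \<gamma>" "eq_obj E \<alpha> \<gamma> = eq_obj E A 1" for lam sm sp \<delta> \<alpha> \<gamma>
    using that bound unfolding mip_optimal_def by (metis mip_feasible_imp_lp_feasible)
  have "lp_optimal x y n m s k E l sm sp d A 1"
    using mip_feasible_imp_lp_feasible[OF mip] bound unfolding lp_optimal_def by blast
  moreover have "mip_optimal x y n m s k E l sm sp d A 1"
    using mip by (rule mip_optimal_if_value) simp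
  moreover have "\<gamma> = 1 \<and> (\<forall>j\<in>E. \<alpha> j \<in> {0, 1}) \<and> mip_optimal x y n m s k E lam sm sp \<delta> \<alpha> \<gamma>"
    if "lp_optimal x y n m s k E lam sm sp \<delta> \<alpha> \<gamma>" for lam sm sp \<delta> \<alpha> \<gamma>
  proof -
    have feas: "lp_feasible x y n m s k E lam sm sp \<delta> \<alpha> \<gamma>" using that by (simp add: lp_optimal_def)
    have "eq_obj E A 1 \<le> eq_obj E \<alpha> \<gamma>"
      using that mip_feasible_imp_lp_feasible[OF mip] by (simp add: lp_optimal_def)
    then have optimal_value: "eq_obj E \<alpha> \<gamma> = eq_obj E A 1" using bound[OF feas] by simp
    then have "\<gamma> = 1" "\<forall>j\<in>E. \<alpha> j \<in> {0, 1}" using tight[OF feas] by auto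
    moreover have "mip_feasible x y n m s k E lam sm sp \<delta> \<alpha> \<gamma>"
      using feas calculation unfolding lp_feasible_def mip_feasible_def by simp
    ultimately show ?thesis using mip_optimal_if_value optimal_value by blast
  qed
  ultimately show ?thesis by blast
qed

theorem theorem2:
  fixes x y :: "nat \<Rightarrow> nat \<Rightarrow> real" and n m s k :: nat
  assumes x_nonneg: "\<forall>i<m. \<forall>j<n. x i j \<ge> 0"
    and y_nonneg: "\<forall>r<s. \<forall>j<n. y r j \<ge> 0"
    and o_in: "k < n"
  defines "E \<equiv> eff_set x y n m s"
  shows "(\<exists>v. (\<exists>lam sm sp \<delta> \<alpha> \<gamma>. lp_optimal x y n m s k E lam sm sp \<delta> \<alpha> \<gamma> \<and> eq_obj E \<alpha> \<gamma> = v)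
            \<and> (\<exists>lam sm sp \<delta> \<alpha> \<gamma>. mip_optimal x y n m s k E lam sm sp \<delta> \<alpha> \<gamma> \<and> eq_obj E \<alpha> \<gamma> = v))
       \<and> (\<forall>lam sm sp \<delta> \<alpha> \<gamma>. lp_optimal x y n m s k E lam sm sp \<delta> \<alpha> \<gamma> \<longrightarrow>
            \<gamma> = 1 \<and> (\<forall>j\<in>E. \<alpha> j \<in> {0, 1}) \<and> mip_optimal x y n m s k E lam sm sp \<delta> \<alpha> \<gamma>)"
proof -
  have "finite E" by (simp add: E_def eff_set_def)
  obtain l0 sm0 sp0 where unit: "cone_feasible x y n m s k E l0 sm0 sp0 1"
    using cone_feasible_unit_intensity[OF o_in] unfolding E_def by blast
  obtain S l sm sp d where "S \<subseteq> E" and cone: "cone_feasible x y n m s k E l sm sp d"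
    and "1 \<le> d" "\<forall>j\<in>S. 1 \<le> l j"
    and vanishing: "\<And>l' sm' sp' d'. cone_feasible x y n m s k E l' sm' sp' d' \<Longrightarrow> \<forall>j\<in>E - S. l' j \<le> 0"
    using cone_point_dominating_support[OF \<open>finite E\<close> unit] by blast
  define A :: "nat \<Rightarrow> real" where "A j = of_bool (j \<in> S)" for j
  have "mip_feasible x y n m s k E l sm sp d A 1"
    using cone \<open>S \<subseteq> E\<close> \<open>1 \<le> d\<close> \<open>\<forall>j\<in>S. 1 \<le> l j\<close> cone_feasible_nonneg[OF cone]
    unfolding mip_feasible_def common_constr_iff_cone_feasible A_def by auto
  then show ?thesis
  proof (rule lp_mip_optimal_if_integral_bound)
    fix lam sm sp \<delta> \<alpha> \<gamma> assume lp: "lp_feasible x y n m s k E lam sm sp \<delta> \<alpha> \<gamma>"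
    then have "\<forall>j\<in>E - S. lam j \<le> 0"
      using vanishing unfolding lp_feasible_def common_constr_iff_cone_feasible by blast
    note bound = eq_obj_le_support_indicator[OF \<open>finite E\<close> \<open>S \<subseteq> E\<close> this lp, folded A_def]
    show "eq_obj E \<alpha> \<gamma> \<le> eq_obj E A 1" by (rule bound(1))
    show "\<gamma> = 1 \<and> (\<forall>j\<in>E. \<alpha> j \<in> {0, 1})" if "eq_obj E \<alpha> \<gamma> = eq_obj E A 1"
      using bound(2)[OF that] by (simp add: A_def)
  qed
qed

end
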